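(* Let $f$ be a DNF with $k$ terms over $\{0,1\}^n$ and let $y\in\{0,1\}^n$ satisfy $f_{>\tau}$ and not $f_{\le\tau}$ ($\tau=1000k$). Draw a uniformly random permutation $\pi$ of $[n]$ and run the sweep process from $y$, obtaining $z_0,z_1,\dots,z_n$. Then with probability at least $2^{-\tilde{O}(\sqrt{k})}$ there is some $i$ such that $\textsc{GenerateCandidateStem}(f,z_i)$ is a valid stem for some term of $f$ satisfied by $y$.
   Context: Terms are sets of literals, a DNF is a set of terms; $|T|$ is the number of literals; $g_{\le L}$ / $g_{>L}$ are the sub-DNFs of terms of length $\le L$ / $>L$. A term $T'$ is a valid stem of a term $T$ if $T'\subseteq T$ and $|T\setminus T'|\le 2k$. $x^{\oplus j}$ is $x$ with bit $j$ flipped. $\textsc{GenerateCandidateStem}(f,x)$: let $I=\{i: f(x^{\oplus i})=0\}$ and output the term $\{x_i:i\in I,x_i=1\}\cup\{\overline{x_i}:i\in I,x_i=0\}$. Sweep process: given $y$ with $f(y)=1$ and a permutation $\pi$ listing $[n]$ as $\pi(0),\dots,\pi(n-1)$, $z_0=y$, and $z_{t+1}=z_t^{\oplus\pi(t)}$ if $f(z_t^{\oplus\pi(t)})=1$, else $z_{t+1}=z_t$. (This is one iteration of the outer loop of the procedure FindCandidateStem.) *)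

theory Defs
  imports "HOL-Probability.Probability_Mass_Function" "HOL-Combinatorics.Multiset_Permutations"
begin

(* A literal (i, b) over variables x_0..x_{n-1}: (i, True) is x_i, (i, False) is the negation of x_i. *)
type_synonym literal = "nat \<times> bool"
type_synonym dnf_term = "literal set"
type_synonym dnf = "dnf_term set"

(* points of {0,1}^n are boolean lists of length n *)
definition sat_term :: "dnf_term \<Rightarrow> bool list \<Rightarrow> bool" where
  "sat_term T x \<longleftrightarrow> (\<forall>(i, b) \<in> T. x ! i = b)"

definition eval_dnf :: "dnf \<Rightarrow> bool list \<Rightarrow> bool" where
  "eval_dnf f x \<longleftrightarrow> (\<exists>T \<in> f. sat_term T x)"

definition dnf_over :: "nat \<Rightarrow> dnf \<Rightarrow> bool" where
  "dnf_over n f \<longleftrightarrow> (\<forall>T \<in> f. \<forall>(i, b) \<in> T. i < n)"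

definition dnf_le :: "nat \<Rightarrow> dnf \<Rightarrow> dnf" where
  "dnf_le L f = {T \<in> f. card T \<le> L}"

definition dnf_gt :: "nat \<Rightarrow> dnf \<Rightarrow> dnf" where
  "dnf_gt L f = {T \<in> f. card T > L}"

definition flip_bit :: "bool list \<Rightarrow> nat \<Rightarrow> bool list" where
  "flip_bit x j = x[j := \<not> x ! j]"

definition valid_stem :: "nat \<Rightarrow> dnf_term \<Rightarrow> dnf_term \<Rightarrow> bool" where
  "valid_stem k T' T \<longleftrightarrow> T' \<subseteq> T \<and> card (T - T') \<le> 2 * k"

definition generate_candidate_stem :: "dnf \<Rightarrow> bool list \<Rightarrow> dnf_term" where
  "generate_candidate_stem f x =
     {(i, x ! i) | i. i < length x \<and> \<not> eval_dnf f (flip_bit x i)}"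

(* sweep process: sweep f y \<pi> t = z_t; \<pi> is a list enumerating [n] as \<pi>(0),...,\<pi>(n-1) *)
fun sweep :: "dnf \<Rightarrow> bool list \<Rightarrow> nat list \<Rightarrow> nat \<Rightarrow> bool list" where
  "sweep f y \<pi> 0 = y"
| "sweep f y \<pi> (Suc t) =
     (let z = sweep f y \<pi> t; z' = flip_bit z (\<pi> ! t)
      in if eval_dnf f z' then z' else z)"

end

(* Call a term alive at z if both y and z satisfy it. Fix one variable falsifying each term
   that y falsifies and count only the orderings that visit none of these variables before a
   valid stem shows up; then the terms falsified by y stay false along the sweep.

   If some alive term T has at most k variables on which the alive terms disagree, the candidate
   stem at z is a valid stem of T: a literal of T is missing only if its flip is rescued by an
   alive term avoiding its variable, or by one of the at most k terms false at z, each of which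
   is rescued by at most one flip. Otherwise, with R the unvisited coordinates, A the alive terms
   and beta = ceiling (sqrt k), the potential |R|! * |A|^(-beta) bounds the number of successful
   orderings of R from below. Visiting a disagreement variable x shrinks A to the terms avoiding
   x, which by Bernoulli's inequality gains a factor 1 + beta * (terms killed) / |A|; since every
   alive term meets more than k disagreement variables, the total gain pays for the at most k
   excluded first moves. As |A| <= k initially, the probability is at least k^(-beta).

   Of the hypotheses on y only the existence of a term of f satisfied by y is needed. *)

theory Submission
  imports Defs
begin

definition term_vars :: "dnf_term \<Rightarrow> nat set" where
  "term_vars T = fst ` T"

lemma term_vars_iff: "i \<in> term_vars T \<longleftrightarrow> (\<exists>b. (i, b) \<in> T)"
  by (force simp: term_vars_def)

lemma length_flip_bit [simp]: "length (flip_bit z i) = length z"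
  by (simp add: flip_bit_def)

lemma nth_flip_bit: "flip_bit z i ! j = (if j = i \<and> i < length z then \<not> z ! i else z ! j)"
  by (auto simp: flip_bit_def nth_list_update list_update_beyond)

lemma sat_term_flip_bit_notin:
  assumes "i \<notin> term_vars T"
  shows "sat_term T (flip_bit z i) \<longleftrightarrow> sat_term T z"
proof -
  have "j \<noteq> i" if "(j, b) \<in> T" for j b
    using that assms unfolding term_vars_def by force
  then show ?thesis unfolding sat_term_def by (auto simp: nth_flip_bit)
qed

lemma not_sat_term_flip_bit:
  assumes "(i, z ! i) \<in> T" "i < length z"
  shows "\<not> sat_term T (flip_bit z i)"
  using assms unfolding sat_term_def by (auto simp: nth_flip_bit)

lemma sat_term_flip_bit_iff:
  assumes "sat_term T z" "i < length z"
  shows "sat_term T (flip_bit z i) \<longleftrightarrow> i \<notin> term_vars T"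
proof
  assume sat: "sat_term T (flip_bit z i)"
  show "i \<notin> term_vars T"
  proof
    assume "i \<in> term_vars T"
    then obtain b where "(i, b) \<in> T" unfolding term_vars_def by auto
    moreover from this have "b = z ! i" using assms(1) unfolding sat_term_def by auto
    ultimately show False using not_sat_term_flip_bit assms(2) sat by blast
  qed
qed (use assms sat_term_flip_bit_notin in blast)

lemma unique_flip_satisfying:
  assumes "\<not> sat_term T z"
  shows "\<exists>c. \<forall>i. sat_term T (flip_bit z i) \<longrightarrow> i = c"
proof -
  obtain c b where cb: "(c, b) \<in> T" "z ! c \<noteq> b"
    using assms unfolding sat_term_def by auto
  have "i = c" if "sat_term T (flip_bit z i)" for i
  proof (rule ccontr)
    assume "i \<noteq> c"
    then have "flip_bit z i ! c = z ! c" by (simp add: nth_flip_bit)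
    then show False using that cb unfolding sat_term_def by auto
  qed
  then show ?thesis by blast
qed

section \<open>Candidate stems\<close>

lemma candidate_stem_subset:
  assumes "T \<in> f" "sat_term T z"
  shows "generate_candidate_stem f z \<subseteq> T"
proof
  fix l assume "l \<in> generate_candidate_stem f z"
  then obtain i where l: "l = (i, z ! i)" and "\<not> eval_dnf f (flip_bit z i)"
    unfolding generate_candidate_stem_def by auto
  then have "i \<in> term_vars T"
    using assms sat_term_flip_bit_notin unfolding eval_dnf_def by blast
  then obtain b where "(i, b) \<in> T" unfolding term_vars_def by auto
  moreover from this have "b = z ! i" using assms(2) unfolding sat_term_def by auto
  ultimately show "l \<in> T" using l by simp
qed

text \<open>The flip of a literal missing from the stem satisfies some term of \<open>f\<close>. Either that term is
  satisfied by \<open>z\<close> and avoids the variable, or it is falsified by \<open>z\<close>, and then no other flip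
  satisfies it.\<close>
lemma card_diff_candidate_stem_le:
  assumes "finite f" "T \<in> f" "sat_term T z" and vars_lt: "\<forall>i \<in> term_vars T. i < length z"
  shows "card (T - generate_candidate_stem f z)
    \<le> card {i \<in> term_vars T. \<exists>T' \<in> f. sat_term T' z \<and> i \<notin> term_vars T'}
      + card {T' \<in> f. \<not> sat_term T' z}"
proof -
  define E where "E = {i \<in> term_vars T. \<exists>T' \<in> f. sat_term T' z \<and> i \<notin> term_vars T'}"
  define U where "U = {T' \<in> f. \<not> sat_term T' z}"
  have "\<forall>T' \<in> U. \<exists>c. \<forall>i. sat_term T' (flip_bit z i) \<longrightarrow> i = c"
    using unique_flip_satisfying unfolding U_def by blast
  then obtain c where c: "\<forall>T' \<in> U. \<forall>i. sat_term T' (flip_bit z i) \<longrightarrow> i = c T'"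
    by metis
  have "T \<subseteq> {0..<length z} \<times> UNIV"
    using vars_lt term_vars_iff by fastforce
  then have finite_T: "finite T"
    by (rule finite_subset) simp
  have literal_value: "b = z ! i" if "(i, b) \<in> T" for i b
    using that assms(3) unfolding sat_term_def by auto
  have "inj_on fst T"
  proof (rule inj_onI)
    fix p q assume pq: "p \<in> T" "q \<in> T" "fst p = fst q"
    then have "snd p = z ! fst p" "snd q = z ! fst q"
      using literal_value by (metis prod.collapse)+
    then show "p = q" using pq(3) by (simp add: prod_eq_iff)
  qed
  then have "card (T - generate_candidate_stem f z) = card (fst ` (T - generate_candidate_stem f z))"
    by (simp add: card_image inj_on_diff)
  also have "\<dots> \<le> card (E \<union> c ` U)"
  proof (rule card_mono)
    show "finite (E \<union> c ` U)"
      using finite_T assms(1) unfolding E_def U_def term_vars_def by simp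
    show "fst ` (T - generate_candidate_stem f z) \<subseteq> E \<union> c ` U"
    proof
      fix i assume "i \<in> fst ` (T - generate_candidate_stem f z)"
      then obtain b where ib: "(i, b) \<in> T" "(i, b) \<notin> generate_candidate_stem f z" by force
      have i: "i \<in> term_vars T" using ib(1) unfolding term_vars_def by force
      then have i_lt: "i < length z" using vars_lt by blast
      have "b = z ! i" using ib(1) literal_value by blast
      then obtain T' where T': "T' \<in> f" "sat_term T' (flip_bit z i)"
        using ib(2) i_lt unfolding generate_candidate_stem_def eval_dnf_def by auto
      show "i \<in> E \<union> c ` U"
      proof (cases "sat_term T' z")
        case True
        then have "i \<notin> term_vars T'" using T'(2) i_lt sat_term_flip_bit_iff by blast
        then show ?thesis using T'(1) True i unfolding E_def by blast
      next
        case False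
        then show ?thesis using T' c unfolding U_def by blast
      qed
    qed
  qed
  also have "\<dots> \<le> card E + card U"
  proof -
    have "card (c ` U) \<le> card U"
      using assms(1) unfolding U_def by (intro card_image_le) simp
    then show ?thesis using card_Un_le[of E "c ` U"] by linarith
  qed
  finally show ?thesis unfolding E_def U_def .
qed

section \<open>Orderings of the sweep\<close>

definition sweep_step :: "dnf \<Rightarrow> bool list \<Rightarrow> nat \<Rightarrow> bool list" where
  "sweep_step f z c = (let z' = flip_bit z c in if eval_dnf f z' then z' else z)"

lemma sweep_Suc: "sweep f y \<pi> (Suc t) = sweep_step f (sweep f y \<pi> t) (\<pi> ! t)"
  by (simp add: sweep_step_def Let_def)

lemma sweep_Cons: "sweep f y (c # \<pi>) (Suc t) = sweep f (sweep_step f y c) \<pi> t"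
  by (induction t) (simp_all only: sweep_Suc sweep.simps(1) nth_Cons_Suc nth_Cons_0)

definition candidate_stem_valid :: "dnf \<Rightarrow> nat \<Rightarrow> bool list \<Rightarrow> bool list \<Rightarrow> bool" where
  "candidate_stem_valid f k y z \<longleftrightarrow>
     (\<exists>T \<in> f. sat_term T y \<and> valid_stem k (generate_candidate_stem f z) T)"

definition sweep_finds_stem :: "dnf \<Rightarrow> nat \<Rightarrow> bool list \<Rightarrow> bool list \<Rightarrow> nat list \<Rightarrow> bool" where
  "sweep_finds_stem f k y z \<pi> \<longleftrightarrow> (\<exists>i \<le> length \<pi>. candidate_stem_valid f k y (sweep f z \<pi> i))"

lemma sweep_finds_stem_if_valid:
  "candidate_stem_valid f k y z \<Longrightarrow> sweep_finds_stem f k y z \<pi>"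
  unfolding sweep_finds_stem_def by force

lemma sweep_finds_stem_Cons:
  "sweep_finds_stem f k y (sweep_step f z c) \<pi> \<Longrightarrow> sweep_finds_stem f k y z (c # \<pi>)"
  unfolding sweep_finds_stem_def by (metis Suc_le_mono length_Cons sweep_Cons)

lemma sum_card_permutations_Cons_le:
  assumes "finite R" "S \<subseteq> R"
  shows "(\<Sum>x\<in>S. card {\<pi> \<in> permutations_of_set (R - {x}). P (x # \<pi>)})
    \<le> card {\<pi> \<in> permutations_of_set R. P \<pi>}"
proof -
  define B where "B x = {\<pi> \<in> permutations_of_set (R - {x}). P (x # \<pi>)}" for x
  have "(\<Sum>x\<in>S. card (B x)) = (\<Sum>x\<in>S. card ((#) x ` B x))"
    by (intro sum.cong refl card_image[symmetric]) (simp add: inj_on_def)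
  also have "\<dots> = card (\<Union>x\<in>S. (#) x ` B x)"
  proof (rule card_UN_disjoint[symmetric])
    show "finite S" using assms finite_subset by blast
    show "\<forall>x\<in>S. finite ((#) x ` B x)" unfolding B_def by simp
    show "\<forall>x\<in>S. \<forall>x'\<in>S. x \<noteq> x' \<longrightarrow> (#) x ` B x \<inter> (#) x' ` B x' = {}" by blast
  qed
  also have "\<dots> \<le> card {\<pi> \<in> permutations_of_set R. P \<pi>}"
  proof (rule card_mono)
    show "finite {\<pi> \<in> permutations_of_set R. P \<pi>}" by simp
    show "(\<Union>x\<in>S. (#) x ` B x) \<subseteq> {\<pi> \<in> permutations_of_set R. P \<pi>}"
    proof
      fix \<sigma> assume "\<sigma> \<in> (\<Union>x\<in>S. (#) x ` B x)"
      then obtain x \<pi> where x: "x \<in> S" "\<pi> \<in> B x" "\<sigma> = x # \<pi>" by blast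
      then have "set \<pi> = R - {x}" "distinct \<pi>" "P \<sigma>"
        unfolding B_def using permutations_of_setD by auto
      moreover have "x \<in> R" using x(1) assms(2) by blast
      ultimately have "set \<sigma> = R" "distinct \<sigma>" "P \<sigma>" using x(3) by auto
      then show "\<sigma> \<in> {\<pi> \<in> permutations_of_set R. P \<pi>}" by (simp add: permutations_of_setI)
    qed
  qed
  finally show ?thesis unfolding B_def .
qed

lemma card_sweeps_finding_stem_if_valid:
  assumes "candidate_stem_valid f k y z" "finite R"
  shows "card {\<pi> \<in> permutations_of_set R. sweep_finds_stem f k y z \<pi>} = fact (card R)"
  using assms sweep_finds_stem_if_valid by simp

section \<open>Counting and arithmetic for the potential\<close>

definition disagreement_vars :: "dnf \<Rightarrow> nat set" where
  "disagreement_vars A = (\<Union>T\<in>A. term_vars T) - (\<Inter>T\<in>A. term_vars T)"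

lemma disagreement_vars_mono: "A' \<subseteq> A \<Longrightarrow> A' \<noteq> {} \<Longrightarrow> disagreement_vars A' \<subseteq> disagreement_vars A"
  unfolding disagreement_vars_def by blast

lemma sum_card_incidences:
  assumes "finite A" "finite D"
  shows "(\<Sum>x\<in>D. card {T \<in> A. x \<in> g T}) = (\<Sum>T\<in>A. card (g T \<inter> D))"
proof -
  have "(\<Sum>x\<in>D. card {T \<in> A. x \<in> g T}) = (\<Sum>x\<in>D. \<Sum>T\<in>A. if x \<in> g T then 1 else 0)"
    using assms by (simp add: sum.inter_filter[symmetric])
  also have "\<dots> = (\<Sum>T\<in>A. \<Sum>x\<in>D. if x \<in> g T then 1 else 0)"
    by (rule sum.swap)
  also have "\<dots> = (\<Sum>T\<in>A. card {x \<in> D. x \<in> g T})"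
    using assms by (simp add: sum.inter_filter[symmetric])
  also have "\<dots> = (\<Sum>T\<in>A. card (g T \<inter> D))"
    by (intro sum.cong refl arg_cong[where f = card]) blast
  finally show ?thesis .
qed

lemma inverse_power_Bernoulli:
  fixes a b \<beta> :: nat
  assumes "1 \<le> b" "b \<le> a"
  shows "(1 / real a) ^ \<beta> * (1 + real \<beta> * real (a - b) / real a) \<le> (1 / real b) ^ \<beta>"
proof -
  have pos: "real b > 0" "real a > 0" using assms by auto
  have "1 + real \<beta> * real (a - b) / real a \<le> 1 + real \<beta> * ((real a - real b) / real b)"
    using pos assms by (intro add_left_mono mult_left_mono) (auto simp: frac_le of_nat_diff)
  also have "\<dots> \<le> (1 + (real a - real b) / real b) ^ \<beta>"
    by (rule Bernoulli_inequality) (use pos assms in \<open>auto simp: field_simps\<close>)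
  also have "1 + (real a - real b) / real b = real a / real b"
    using pos by (simp add: field_simps)
  finally have "(1 / real a) ^ \<beta> * (1 + real \<beta> * real (a - b) / real a)
      \<le> (1 / real a) ^ \<beta> * (real a / real b) ^ \<beta>"
    by (rule mult_left_mono) simp
  also have "\<dots> = (1 / real b) ^ \<beta>"
    using pos by (simp add: power_mult_distrib[symmetric])
  finally show ?thesis .
qed

lemma incidence_arith:
  fixes a q K \<kappa> \<beta> :: nat
  assumes "a * (\<kappa> + 1) \<le> K + q * (a - 1)" "q + a \<le> \<kappa>" "\<kappa> \<le> \<beta> * \<beta>" "1 \<le> a"
  shows "a * q \<le> \<beta> * K"
proof -
  have "a * (q + a) + a \<le> a * (\<kappa> + 1)"
    using mult_le_mono2[OF assms(2), of a] by (simp add: algebra_simps)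
  moreover have "q * (a - 1) + q = q * a"
    using assms(4) by (cases a) (auto simp: algebra_simps)
  ultimately have "a * a + q \<le> K"
    using assms(1) by (simp add: algebra_simps)
  then have "\<beta> * (a * a) + \<beta> * q \<le> \<beta> * K"
    by (metis add_mult_distrib2 mult_le_mono2)
  moreover have "a * q \<le> \<beta> * (a * a) + \<beta> * q"
  proof (cases "a \<le> \<beta>")
    case True
    then show ?thesis using mult_le_mono1[OF True, of q] by linarith
  next
    case False
    have "q \<le> \<beta> * \<beta>" using assms(2,3) by linarith
    then have "a * q \<le> \<beta> * \<beta> * a" by (simp add: mult.commute)
    also have "\<dots> \<le> \<beta> * (a * a)"
      using False by (simp add: mult.assoc mult_le_mono)
    finally show ?thesis by linarith
  qed
  ultimately show ?thesis by linarith
qed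

text \<open>Each \<open>x \<in> D - Q\<close> gains the Bernoulli factor \<open>1 + \<beta> (a - b x) / a\<close> over \<open>(1 / a) ^ \<beta>\<close>;
  the compensation hypothesis makes these gains cover the \<open>card Q\<close> missing summands.\<close>
lemma potential_averaging:
  fixes a \<beta> :: nat and b :: "'x \<Rightarrow> nat"
  assumes "finite R" "Q \<subseteq> R" "D \<subseteq> R" "1 \<le> a"
    and unchanged: "\<And>x. x \<in> R - Q - D \<Longrightarrow> b x = a"
    and shrunk: "\<And>x. x \<in> D - Q \<Longrightarrow> 1 \<le> b x \<and> b x \<le> a"
    and compensated: "a * card Q \<le> \<beta> * (\<Sum>x\<in>D - Q. a - b x)"
  shows "real (card R) * (1 / real a) ^ \<beta> \<le> (\<Sum>x\<in>R - Q. (1 / real (b x)) ^ \<beta>)"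
proof -
  define g where "g m = (1 / real m) ^ \<beta>" for m :: nat
  define K where "K = (\<Sum>x\<in>D - Q. a - b x)"
  have fin: "finite (D - Q)" "finite (R - Q - D)" using assms(1,3) finite_subset by auto
  have split: "R - Q = (D - Q) \<union> (R - Q - D)" using assms(3) by blast
  have card_R: "card R = card (D - Q) + card Q + card (R - Q - D)"
  proof -
    have "card R = card (R - Q) + card Q"
      using assms(1,2) by (metis card_Diff_subset card_mono finite_subset le_add_diff_inverse2)
    moreover have "card (R - Q) = card (D - Q) + card (R - Q - D)"
      by (subst split, rule card_Un_disjoint) (use fin in auto)
    ultimately show ?thesis by linarith
  qed
  define c where "c = real \<beta> * real K / real a"
  have "real (card Q) \<le> c"
    using compensated assms(4) unfolding K_def[symmetric] c_def
    by (simp add: pos_le_divide_eq mult.commute flip: of_nat_mult)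
  then have "real (card Q) * g a \<le> c * g a"
    by (rule mult_right_mono) (simp add: g_def)
  then have "real (card R) * g a \<le> g a * (real (card (D - Q)) + c) + real (card (R - Q - D)) * g a"
    unfolding card_R by (simp add: algebra_simps)
  also have "c = (\<Sum>x\<in>D - Q. real \<beta> * real (a - b x)) / real a"
    unfolding c_def K_def by (simp add: of_nat_sum sum_distrib_left)
  also have "g a * (real (card (D - Q)) + (\<Sum>x\<in>D - Q. real \<beta> * real (a - b x)) / real a)
      = (\<Sum>x\<in>D - Q. g a * (1 + real \<beta> * real (a - b x) / real a))"
    by (simp only: sum_distrib_left[symmetric] sum.distrib sum_divide_distrib[symmetric]) simp
  also have "\<dots> \<le> (\<Sum>x\<in>D - Q. g (b x))"
    using shrunk inverse_power_Bernoulli unfolding g_def by (intro sum_mono) blast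
  also have "real (card (R - Q - D)) * g a = (\<Sum>x\<in>R - Q - D. g (b x))"
    using unchanged by simp
  also have "(\<Sum>x\<in>D - Q. g (b x)) + (\<Sum>x\<in>R - Q - D. g (b x)) = (\<Sum>x\<in>R - Q. g (b x))"
    by (subst split, rule sum.union_disjoint[symmetric]) (use fin in auto)
  finally show ?thesis unfolding g_def by (simp add: mult.commute)
qed

lemma inverse_power_ceiling_sqrt_ge:
  fixes k :: nat
  assumes "1 \<le> k"
  shows "2 powr (- 2 * sqrt (real k) * (log 2 (real k + 2)) powr 2) \<le> (1 / real k) ^ nat \<lceil>sqrt (real k)\<rceil>"
proof -
  define \<beta> where "\<beta> = nat \<lceil>sqrt (real k)\<rceil>"
  define L where "L = log 2 (real k + 2)"
  have sqrt_ge_1: "sqrt (real k) \<ge> 1" using assms by simp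
  have "real \<beta> = real_of_int \<lceil>sqrt (real k)\<rceil>" unfolding \<beta>_def by simp
  then have "real \<beta> \<le> sqrt (real k) + 1" by linarith
  then have \<beta>_le: "real \<beta> \<le> 2 * sqrt (real k)" using sqrt_ge_1 by linarith
  have L_ge_1: "L \<ge> 1" unfolding L_def using assms by simp
  have log_k: "0 \<le> log 2 (real k)" "log 2 (real k) \<le> L" unfolding L_def using assms by simp_all
  have "real \<beta> * log 2 (real k) \<le> 2 * sqrt (real k) * log 2 (real k)"
    using \<beta>_le log_k by (intro mult_right_mono) auto
  also have "\<dots> \<le> 2 * sqrt (real k) * L ^ 2"
  proof -
    have "L \<le> L ^ 2" using L_ge_1 by (simp add: power2_eq_square)
    then show ?thesis using log_k sqrt_ge_1 by (intro mult_left_mono) auto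
  qed
  finally have exponent: "- 2 * sqrt (real k) * L powr 2 \<le> - (real \<beta> * log 2 (real k))"
    using L_ge_1 by (simp add: powr_realpow)
  have "2 powr (- (real \<beta> * log 2 (real k))) = (2 powr (log 2 (real k))) powr (- real \<beta>)"
    by (simp add: powr_powr mult.commute)
  also have "\<dots> = 1 / real k ^ \<beta>"
    using assms by (simp add: powr_minus powr_realpow divide_inverse)
  finally have "(1 / real k) ^ \<beta> = 2 powr (- (real \<beta> * log 2 (real k)))"
    by (simp add: power_one_over)
  then show ?thesis using exponent unfolding \<beta>_def[symmetric] L_def[symmetric] by simp
qed

section \<open>The sweep from \<open>y\<close>\<close>

definition alive_terms :: "dnf \<Rightarrow> bool list \<Rightarrow> bool list \<Rightarrow> dnf" where
  "alive_terms f y z = {T \<in> f. sat_term T y \<and> sat_term T z}"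

definition falsifying_var :: "bool list \<Rightarrow> dnf_term \<Rightarrow> nat" where
  "falsifying_var y T = (SOME i. \<exists>b. (i, b) \<in> T \<and> y ! i \<noteq> b)"

definition falsifying_vars :: "dnf \<Rightarrow> bool list \<Rightarrow> nat set" where
  "falsifying_vars f y = falsifying_var y ` {T \<in> f. \<not> sat_term T y}"

lemma falsifying_var:
  assumes "\<not> sat_term T y"
  shows "\<exists>b. (falsifying_var y T, b) \<in> T \<and> y ! falsifying_var y T \<noteq> b"
proof -
  have "\<exists>i b. (i, b) \<in> T \<and> y ! i \<noteq> b" using assms unfolding sat_term_def by auto
  then show ?thesis unfolding falsifying_var_def by (rule someI_ex)
qed

lemma not_sat_term_if_agrees_on_falsifying_vars:
  assumes "T \<in> f" "\<not> sat_term T y" "\<forall>i \<in> falsifying_vars f y. z ! i = y ! i"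
  shows "\<not> sat_term T z"
proof -
  obtain b where "(falsifying_var y T, b) \<in> T" "y ! falsifying_var y T \<noteq> b"
    using falsifying_var[OF assms(2)] by blast
  moreover have "z ! falsifying_var y T = y ! falsifying_var y T"
    using assms unfolding falsifying_vars_def by blast
  ultimately show ?thesis unfolding sat_term_def by fastforce
qed

locale sweep_setting =
  fixes n k :: nat and f :: dnf and y :: "bool list"
  assumes dnf_over: "dnf_over n f" and card_f: "card f = k" and length_y: "length y = n"
begin

lemma var_lt: "T \<in> f \<Longrightarrow> i \<in> term_vars T \<Longrightarrow> i < n"
  using dnf_over unfolding dnf_over_def term_vars_iff by blast

lemma finite_f: "finite f"
proof (rule finite_subset)
  show "f \<subseteq> Pow ({0..<n} \<times> UNIV)" using var_lt term_vars_iff by fastforce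
qed simp

lemma finite_alive_terms: "finite (alive_terms f y z)"
  using finite_f unfolding alive_terms_def by simp

text \<open>\<open>R\<close> is the set of coordinates the sweep has not visited yet. Only orderings that
  visit no coordinate of \<open>falsifying_vars f y\<close> before finding a stem are counted, so these
  coordinates stay in \<open>R\<close> and every term falsified by \<open>y\<close> stays falsified.\<close>
definition sweep_invariant :: "nat set \<Rightarrow> bool list \<Rightarrow> bool" where
  "sweep_invariant R z \<longleftrightarrow> R \<subseteq> {0..<n} \<and> length z = n \<and> (\<forall>i \<in> R. z ! i = y ! i)
     \<and> alive_terms f y z \<noteq> {} \<and> falsifying_vars f y \<subseteq> R
     \<and> disagreement_vars (alive_terms f y z) \<subseteq> R"

lemma sweep_invariant_init:
  assumes "\<exists>T \<in> f. sat_term T y"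
  shows "sweep_invariant {0..<n} y"
proof -
  have "falsifying_vars f y \<subseteq> {0..<n}"
    using falsifying_var var_lt term_vars_iff unfolding falsifying_vars_def by fastforce
  moreover have "disagreement_vars (alive_terms f y y) \<subseteq> {0..<n}"
    using var_lt unfolding disagreement_vars_def alive_terms_def by auto
  ultimately show ?thesis
    using assms length_y unfolding sweep_invariant_def alive_terms_def by auto
qed

lemma sat_term_flip_bit_unvisited:
  assumes inv: "sweep_invariant R z" and x: "x \<in> R - falsifying_vars f y" and "T \<in> f"
  shows "sat_term T (flip_bit z x) \<longleftrightarrow> T \<in> alive_terms f y z \<and> x \<notin> term_vars T"
proof
  assume sat: "sat_term T (flip_bit z x)"
  have x_lt: "x < length z" using inv x unfolding sweep_invariant_def by auto
  have "\<forall>i \<in> falsifying_vars f y. flip_bit z x ! i = y ! i"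
    using inv x unfolding sweep_invariant_def by (auto simp: nth_flip_bit)
  then have sat_y: "sat_term T y"
    using not_sat_term_if_agrees_on_falsifying_vars \<open>T \<in> f\<close> sat by blast
  have x_notin: "x \<notin> term_vars T"
  proof
    assume "x \<in> term_vars T"
    then obtain b where "(x, b) \<in> T" unfolding term_vars_iff by blast
    moreover have "b = y ! x" "z ! x = y ! x"
      using calculation sat_y inv x unfolding sat_term_def sweep_invariant_def by auto
    ultimately show False using not_sat_term_flip_bit[of x z T] x_lt sat by simp
  qed
  then have "sat_term T z" using sat sat_term_flip_bit_notin by blast
  then show "T \<in> alive_terms f y z \<and> x \<notin> term_vars T"
    using \<open>T \<in> f\<close> sat_y x_notin unfolding alive_terms_def by blast
next
  assume "T \<in> alive_terms f y z \<and> x \<notin> term_vars T"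
  then show "sat_term T (flip_bit z x)"
    using sat_term_flip_bit_notin unfolding alive_terms_def by blast
qed

lemma alive_terms_sweep_step:
  assumes "sweep_invariant R z" "x \<in> R - falsifying_vars f y"
  shows "alive_terms f y (sweep_step f z x) =
    (if {T \<in> alive_terms f y z. x \<notin> term_vars T} = {} then alive_terms f y z
     else {T \<in> alive_terms f y z. x \<notin> term_vars T})"
proof -
  have "alive_terms f y (flip_bit z x) = {T \<in> alive_terms f y z. x \<notin> term_vars T}"
    using sat_term_flip_bit_unvisited[OF assms] unfolding alive_terms_def by blast
  moreover have "eval_dnf f (flip_bit z x) \<longleftrightarrow> {T \<in> alive_terms f y z. x \<notin> term_vars T} \<noteq> {}"
    using sat_term_flip_bit_unvisited[OF assms] unfolding eval_dnf_def alive_terms_def by blast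
  ultimately show ?thesis unfolding sweep_step_def Let_def by auto
qed

lemma sweep_invariant_step:
  assumes inv: "sweep_invariant R z" and x: "x \<in> R - falsifying_vars f y"
  shows "sweep_invariant (R - {x}) (sweep_step f z x)"
proof -
  let ?A = "alive_terms f y z" and ?A' = "alive_terms f y (sweep_step f z x)"
  have alive: "?A' \<noteq> {}" "?A' \<subseteq> ?A"
    using alive_terms_sweep_step[OF assms] inv unfolding sweep_invariant_def by auto
  have "disagreement_vars ?A' \<subseteq> R"
    using disagreement_vars_mono[OF alive(2,1)] inv unfolding sweep_invariant_def by blast
  moreover have "x \<notin> disagreement_vars ?A'"
    using alive_terms_sweep_step[OF assms] unfolding disagreement_vars_def by auto
  moreover have "\<forall>i \<in> R - {x}. sweep_step f z x ! i = y ! i"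
    using inv unfolding sweep_invariant_def sweep_step_def Let_def by (auto simp: nth_flip_bit)
  ultimately show ?thesis
    using inv x alive unfolding sweep_invariant_def sweep_step_def Let_def by auto
qed

lemma finite_disagreement_vars:
  "sweep_invariant R z \<Longrightarrow> finite (disagreement_vars (alive_terms f y z))"
  using finite_subset[of _ "{0..<n}"] unfolding sweep_invariant_def by auto

lemma candidate_stem_valid_if_few_disagreements:
  assumes inv: "sweep_invariant R z" and T: "T \<in> alive_terms f y z"
    and few: "card (term_vars T \<inter> disagreement_vars (alive_terms f y z)) \<le> k"
  shows "candidate_stem_valid f k y z"
proof -
  let ?A = "alive_terms f y z"
  have T_f: "T \<in> f" and "sat_term T y" and sat_z: "sat_term T z"
    using T unfolding alive_terms_def by auto
  have "\<forall>i \<in> term_vars T. i < length z"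
    using var_lt T_f inv unfolding sweep_invariant_def by auto
  then have stem: "card (T - generate_candidate_stem f z)
      \<le> card {i \<in> term_vars T. \<exists>T' \<in> f. sat_term T' z \<and> i \<notin> term_vars T'}
        + card {T' \<in> f. \<not> sat_term T' z}"
    using card_diff_candidate_stem_le finite_f T_f sat_z by blast
  have "T' \<in> ?A" if "T' \<in> f" "sat_term T' z" for T'
    using that inv not_sat_term_if_agrees_on_falsifying_vars
    unfolding alive_terms_def sweep_invariant_def by blast
  then have "{i \<in> term_vars T. \<exists>T' \<in> f. sat_term T' z \<and> i \<notin> term_vars T'}
      \<subseteq> term_vars T \<inter> disagreement_vars ?A"
    using T unfolding disagreement_vars_def by blast
  moreover note finite_disagreement_vars[OF inv]
  ultimately have "card {i \<in> term_vars T. \<exists>T' \<in> f. sat_term T' z \<and> i \<notin> term_vars T'}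
      \<le> card (term_vars T \<inter> disagreement_vars ?A)"
    by (intro card_mono) auto
  then have "card {i \<in> term_vars T. \<exists>T' \<in> f. sat_term T' z \<and> i \<notin> term_vars T'} \<le> k"
    using few by linarith
  moreover have "card {T' \<in> f. \<not> sat_term T' z} \<le> k"
    using card_mono[OF finite_f, of "{T' \<in> f. \<not> sat_term T' z}"] card_f by auto
  ultimately have "card (T - generate_candidate_stem f z) \<le> 2 * k" using stem by linarith
  then show ?thesis
    using T_f \<open>sat_term T y\<close> candidate_stem_subset[OF T_f sat_z]
    unfolding candidate_stem_valid_def valid_stem_def by blast
qed

lemma card_falsifying_vars_add_alive_le:
  "card (falsifying_vars f y) + card (alive_terms f y z) \<le> k"
proof -
  let ?N = "{T \<in> f. \<not> sat_term T y}" and ?S = "{T \<in> f. sat_term T y}"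
  have "card (falsifying_vars f y) \<le> card ?N"
    unfolding falsifying_vars_def using finite_f by (intro card_image_le) simp
  moreover have "card (alive_terms f y z) \<le> card ?S"
    using finite_f unfolding alive_terms_def by (intro card_mono) auto
  moreover have "card f = card (?N \<union> ?S)"
    by (rule arg_cong[where f = card]) blast
  then have "card f = card ?N + card ?S"
    using finite_f by (simp add: card_Un_disjoint disjoint_iff)
  ultimately show ?thesis using card_f by linarith
qed

text \<open>Every alive term has more than \<open>k\<close> variables on which the alive terms disagree;
  the incidences on \<open>falsifying_vars f y\<close> are bounded crudely, since each such variable
  misses at least one alive term.\<close>
lemma alive_incidences_ge:
  assumes inv: "sweep_invariant R z" and not_valid: "\<not> candidate_stem_valid f k y z"
  shows "card (alive_terms f y z) * (k + 1)
    \<le> (\<Sum>x \<in> disagreement_vars (alive_terms f y z) - falsifying_vars f y.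
          card {T \<in> alive_terms f y z. x \<in> term_vars T})
      + card (falsifying_vars f y) * (card (alive_terms f y z) - 1)"
proof -
  define A where "A = alive_terms f y z"
  define D where "D = disagreement_vars A"
  define Q where "Q = falsifying_vars f y"
  define incid where "incid x = card {T \<in> A. x \<in> term_vars T}" for x
  have fin: "finite A" "finite D" "finite Q"
    using finite_alive_terms finite_disagreement_vars[OF inv] inv finite_subset[of _ "{0..<n}"]
    unfolding A_def D_def Q_def sweep_invariant_def by auto
  have "k + 1 \<le> card (term_vars T \<inter> D)" if "T \<in> A" for T
    using candidate_stem_valid_if_few_disagreements[OF inv] that not_valid
    unfolding A_def D_def by force
  then have "card A * (k + 1) \<le> (\<Sum>T\<in>A. card (term_vars T \<inter> D))"
    using sum_mono[of A "\<lambda>_. k + 1"] by simp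
  also have "\<dots> = (\<Sum>x\<in>D. incid x)"
    unfolding incid_def using sum_card_incidences[OF fin(1,2)] by simp
  also have "\<dots> = (\<Sum>x\<in>D - Q. incid x) + (\<Sum>x\<in>D \<inter> Q. incid x)"
    using sum.Int_Diff[OF fin(2), of incid Q] by simp
  also have "\<dots> \<le> (\<Sum>x\<in>D - Q. incid x) + card Q * (card A - 1)"
  proof -
    have "incid x \<le> card A - 1" if "x \<in> D" for x
    proof -
      have "{T \<in> A. x \<in> term_vars T} \<subset> A"
        using that unfolding D_def disagreement_vars_def by blast
      then have "incid x < card A"
        unfolding incid_def by (rule psubset_card_mono[OF fin(1)])
      then show ?thesis by linarith
    qed
    then have "(\<Sum>x\<in>D \<inter> Q. incid x) \<le> card (D \<inter> Q) * (card A - 1)"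
      using sum_mono[of "D \<inter> Q" incid "\<lambda>_. card A - 1"] by simp
    also have "\<dots> \<le> card Q * (card A - 1)"
      using fin(3) by (simp add: card_mono)
    finally show ?thesis by simp
  qed
  finally show ?thesis unfolding incid_def A_def D_def Q_def by simp
qed

lemma alive_terms_sweep_step_disagreement:
  assumes "sweep_invariant R z"
    and "x \<in> disagreement_vars (alive_terms f y z) - falsifying_vars f y"
  shows "alive_terms f y (sweep_step f z x) = {T \<in> alive_terms f y z. x \<notin> term_vars T}"
    and "{T \<in> alive_terms f y z. x \<notin> term_vars T} \<noteq> {}"
proof -
  have x: "x \<in> R - falsifying_vars f y"
    using assms unfolding sweep_invariant_def by blast
  show ne: "{T \<in> alive_terms f y z. x \<notin> term_vars T} \<noteq> {}"
    using assms(2) unfolding disagreement_vars_def by blast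
  show "alive_terms f y (sweep_step f z x) = {T \<in> alive_terms f y z. x \<notin> term_vars T}"
    using alive_terms_sweep_step[OF assms(1) x] by (simp only: ne if_False)
qed

lemma alive_terms_sweep_step_agreement:
  assumes "sweep_invariant R z"
    and "x \<in> R - falsifying_vars f y - disagreement_vars (alive_terms f y z)"
  shows "alive_terms f y (sweep_step f z x) = alive_terms f y z"
proof (cases "{T \<in> alive_terms f y z. x \<notin> term_vars T} = {}")
  case False
  then have "{T \<in> alive_terms f y z. x \<notin> term_vars T} = alive_terms f y z"
    using assms(2) unfolding disagreement_vars_def by blast
  then show ?thesis using alive_terms_sweep_step[OF assms(1)] assms(2) by simp
qed (use alive_terms_sweep_step[OF assms(1)] assms(2) in simp)

lemma potential_step:
  assumes inv: "sweep_invariant R z" and not_valid: "\<not> candidate_stem_valid f k y z"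
    and k_le: "k \<le> \<beta> * \<beta>"
  shows "real (card R) * (1 / real (card (alive_terms f y z))) ^ \<beta>
    \<le> (\<Sum>x \<in> R - falsifying_vars f y. (1 / real (card (alive_terms f y (sweep_step f z x)))) ^ \<beta>)"
proof -
  define A where "A = alive_terms f y z"
  define D where "D = disagreement_vars A"
  define Q where "Q = falsifying_vars f y"
  define b where "b x = card (alive_terms f y (sweep_step f z x))" for x
  have R: "finite R" "Q \<subseteq> R" "D \<subseteq> R" and "A \<noteq> {}"
    using inv finite_subset[of R "{0..<n}"]
    unfolding sweep_invariant_def A_def D_def Q_def by auto
  then have a_ge: "1 \<le> card A"
    using finite_alive_terms unfolding A_def by (simp add: Suc_le_eq card_gt_0_iff)
  have shrunk: "1 \<le> b x \<and> b x \<le> card A \<and> card A - b x = card {T \<in> A. x \<in> term_vars T}"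
    if "x \<in> D - Q" for x
  proof -
    let ?K = "{T \<in> A. x \<in> term_vars T}"
    have alive: "alive_terms f y (sweep_step f z x) = A - ?K" and "?K \<subset> A"
      using alive_terms_sweep_step_disagreement[OF inv] that unfolding A_def D_def Q_def
      by auto
    moreover have "finite A" using finite_alive_terms unfolding A_def .
    ultimately have "card ?K < card A" "b x = card A - card ?K"
      unfolding b_def alive by (auto intro: psubset_card_mono card_Diff_subset finite_subset)
    then show ?thesis by linarith
  qed
  have "card A * card Q \<le> \<beta> * (\<Sum>x\<in>D - Q. card A - b x)"
  proof (rule incidence_arith[OF _ _ k_le a_ge])
    have "(\<Sum>x\<in>D - Q. card A - b x) = (\<Sum>x\<in>D - Q. card {T \<in> A. x \<in> term_vars T})"
      using shrunk by (intro sum.cong) auto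
    then show "card A * (k + 1) \<le> (\<Sum>x\<in>D - Q. card A - b x) + card Q * (card A - 1)"
      using alive_incidences_ge[OF inv not_valid] unfolding A_def D_def Q_def by simp
    show "card Q + card A \<le> k"
      using card_falsifying_vars_add_alive_le unfolding A_def Q_def .
  qed
  moreover have "b x = card A" if "x \<in> R - Q - D" for x
    using alive_terms_sweep_step_agreement[OF inv] that unfolding b_def A_def D_def Q_def by simp
  ultimately show ?thesis
    using potential_averaging[OF R a_ge, of b \<beta>] shrunk unfolding A_def Q_def b_def by blast
qed

lemma sweep_invariant_not_valid_nonempty:
  assumes inv: "sweep_invariant R z" and not_valid: "\<not> candidate_stem_valid f k y z"
  shows "R \<noteq> {}"
proof
  assume "R = {}"
  then have "disagreement_vars (alive_terms f y z) = {}" "falsifying_vars f y = {}"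
    using inv unfolding sweep_invariant_def by auto
  moreover have "alive_terms f y z \<noteq> {}" using inv unfolding sweep_invariant_def by blast
  then have "card (alive_terms f y z) \<noteq> 0" using finite_alive_terms by simp
  ultimately show False using alive_incidences_ge[OF inv not_valid] by simp
qed

lemma card_sweeps_finding_stem_ge_if_valid:
  assumes "sweep_invariant R z" "candidate_stem_valid f k y z"
  shows "fact (card R) * (1 / real (card (alive_terms f y z))) ^ \<beta>
    \<le> real (card {\<pi> \<in> permutations_of_set R. sweep_finds_stem f k y z \<pi>})"
proof -
  have "finite R" "alive_terms f y z \<noteq> {}"
    using assms(1) finite_subset unfolding sweep_invariant_def by auto
  then have "(1 / real (card (alive_terms f y z))) ^ \<beta> \<le> 1"
    using finite_alive_terms by (intro power_le_one) (auto simp: Suc_le_eq card_gt_0_iff)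
  then show ?thesis
    using card_sweeps_finding_stem_if_valid[OF assms(2) \<open>finite R\<close>] by simp
qed

lemma card_sweeps_finding_stem_step:
  assumes inv: "sweep_invariant R z" and not_valid: "\<not> candidate_stem_valid f k y z"
    and k_le: "k \<le> \<beta> * \<beta>" and card_R: "card R = Suc m"
    and IH: "\<And>x. x \<in> R - falsifying_vars f y \<Longrightarrow>
      fact m * (1 / real (card (alive_terms f y (sweep_step f z x)))) ^ \<beta>
        \<le> real (card {\<pi> \<in> permutations_of_set (R - {x}). sweep_finds_stem f k y (sweep_step f z x) \<pi>})"
  shows "fact (Suc m) * (1 / real (card (alive_terms f y z))) ^ \<beta>
    \<le> real (card {\<pi> \<in> permutations_of_set R. sweep_finds_stem f k y z \<pi>})"
proof -
  define g where "g z' = (1 / real (card (alive_terms f y z'))) ^ \<beta>" for z'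
  define S where "S = R - falsifying_vars f y"
  have "finite R" using inv finite_subset unfolding sweep_invariant_def by blast
  have "fact (Suc m) * g z = fact m * (real (card R) * g z)"
    unfolding card_R by (simp add: algebra_simps)
  also have "\<dots> \<le> fact m * (\<Sum>x\<in>S. g (sweep_step f z x))"
    using potential_step[OF inv not_valid k_le] unfolding g_def S_def
    by (intro mult_left_mono) auto
  also have "\<dots> = (\<Sum>x\<in>S. fact m * g (sweep_step f z x))"
    by (simp add: sum_distrib_left)
  also have "\<dots> \<le> (\<Sum>x\<in>S. real (card {\<pi> \<in> permutations_of_set (R - {x}).
      sweep_finds_stem f k y (sweep_step f z x) \<pi>}))"
    using IH unfolding g_def S_def by (rule sum_mono)
  also have "\<dots> \<le> real (\<Sum>x\<in>S. card {\<pi> \<in> permutations_of_set (R - {x}).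
      sweep_finds_stem f k y z (x # \<pi>)})"
    unfolding of_nat_sum using sweep_finds_stem_Cons by (intro sum_mono of_nat_mono card_mono) auto
  also have "\<dots> \<le> real (card {\<pi> \<in> permutations_of_set R. sweep_finds_stem f k y z \<pi>})"
    unfolding of_nat_le_iff
    by (rule sum_card_permutations_Cons_le[OF \<open>finite R\<close>]) (auto simp: S_def)
  finally show ?thesis unfolding g_def .
qed

lemma card_sweeps_finding_stem_ge:
  assumes k_le: "k \<le> \<beta> * \<beta>" and "sweep_invariant R z"
  shows "fact (card R) * (1 / real (card (alive_terms f y z))) ^ \<beta>
    \<le> real (card {\<pi> \<in> permutations_of_set R. sweep_finds_stem f k y z \<pi>})"
  using assms(2)
proof (induction "card R" arbitrary: R z)
  case 0
  then have "finite R" using finite_subset unfolding sweep_invariant_def by blast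
  then have "candidate_stem_valid f k y z"
    using 0 sweep_invariant_not_valid_nonempty by fastforce
  then show ?case using card_sweeps_finding_stem_ge_if_valid[OF "0.prems"] by blast
next
  case (Suc m)
  show ?case
  proof (cases "candidate_stem_valid f k y z")
    case True
    then show ?thesis using Suc.prems card_sweeps_finding_stem_ge_if_valid by blast
  next
    case False
    have "finite R" using Suc.prems finite_subset unfolding sweep_invariant_def by blast
    show ?thesis
      unfolding Suc.hyps(2)[symmetric]
    proof (rule card_sweeps_finding_stem_step[OF Suc.prems False k_le Suc.hyps(2)[symmetric]],
        goal_cases)
      case (1 x)
      then have "m = card (R - {x})" using Suc.hyps(2) \<open>finite R\<close> by simp
      then show ?case using Suc.hyps(1) sweep_invariant_step[OF Suc.prems 1] by blast
    qed
  qed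
qed

lemma prob_sweep_finds_stem_ge:
  assumes "\<exists>T \<in> f. sat_term T y"
  shows "(1 / real k) ^ nat \<lceil>sqrt (real k)\<rceil>
    \<le> measure_pmf.prob (pmf_of_set (permutations_of_set {0..<n}))
       {\<pi>. \<exists>i \<le> n. \<exists>T \<in> f. sat_term T y \<and>
              valid_stem k (generate_candidate_stem f (sweep f y \<pi> i)) T}"
    (is "_ \<le> measure_pmf.prob (pmf_of_set ?P) ?E")
proof -
  define \<beta> where "\<beta> = nat \<lceil>sqrt (real k)\<rceil>"
  have "sqrt (real k) \<le> real \<beta>" unfolding \<beta>_def by linarith
  then have "sqrt (real k) * sqrt (real k) \<le> real \<beta> * real \<beta>"
    by (intro mult_mono) auto
  then have k_le: "k \<le> \<beta> * \<beta>" by (simp flip: of_nat_mult)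
  have inv: "sweep_invariant {0..<n} y" by (rule sweep_invariant_init[OF assms])
  have "{\<pi> \<in> ?P. sweep_finds_stem f k y y \<pi>} = ?P \<inter> ?E"
    by (auto simp: sweep_finds_stem_def candidate_stem_valid_def length_finite_permutations_of_set)
  then have "fact n * (1 / real (card (alive_terms f y y))) ^ \<beta> \<le> real (card (?P \<inter> ?E))"
    using card_sweeps_finding_stem_ge[OF k_le inv] by simp
  then have "(1 / real (card (alive_terms f y y))) ^ \<beta> \<le> measure_pmf.prob (pmf_of_set ?P) ?E"
    by (simp add: measure_pmf_of_set field_simps)
  moreover have "1 \<le> card (alive_terms f y y)" "card (alive_terms f y y) \<le> k"
    using inv finite_alive_terms card_falsifying_vars_add_alive_le[of y]
    unfolding sweep_invariant_def by (auto simp: Suc_le_eq card_gt_0_iff)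
  then have "(1 / real k) ^ \<beta> \<le> (1 / real (card (alive_terms f y y))) ^ \<beta>"
    by (intro power_mono) (auto simp: frac_le)
  ultimately show ?thesis unfolding \<beta>_def by linarith
qed

end

theorem lemma4p12:
  "\<exists>C > (0::real). \<forall>n k (f::dnf) y.
     dnf_over n f \<longrightarrow> card f = k \<longrightarrow> length y = n \<longrightarrow>
     eval_dnf (dnf_gt (1000 * k) f) y \<longrightarrow> \<not> eval_dnf (dnf_le (1000 * k) f) y \<longrightarrow>
     measure_pmf.prob (pmf_of_set (permutations_of_set {0..<n}))
       {\<pi>. \<exists>i \<le> n. \<exists>T \<in> f. sat_term T y \<and>
              valid_stem k (generate_candidate_stem f (sweep f y \<pi> i)) T}
     \<ge> 2 powr (- C * sqrt (real k) * (log 2 (real k + 2)) powr C)"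
proof (intro exI[of _ 2] conjI allI impI)
  fix n k f y
  assume "dnf_over n f" "card f = k" "length y = n" and long: "eval_dnf (dnf_gt (1000 * k) f) y"
  then interpret sweep_setting n k f y by unfold_locales
  have sat: "\<exists>T \<in> f. sat_term T y"
    using long unfolding eval_dnf_def dnf_gt_def by auto
  then have "1 \<le> k"
    using finite_f card_f by (auto simp: Suc_le_eq card_gt_0_iff)
  then show "2 powr (- 2 * sqrt (real k) * (log 2 (real k + 2)) powr 2)
      \<le> measure_pmf.prob (pmf_of_set (permutations_of_set {0..<n}))
         {\<pi>. \<exists>i \<le> n. \<exists>T \<in> f. sat_term T y \<and>
                valid_stem k (generate_candidate_stem f (sweep f y \<pi> i)) T}"
    using inverse_power_ceiling_sqrt_ge prob_sweep_finds_stem_ge[OF sat] by (meson order_trans)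
qed simp

end
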